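(* Let $\rho$ and $\sigma$ be Hermitian matrices acting on the same finite-dimensional complex Hilbert space such that $\operatorname{tr}(\rho^{2})\le 1$ and $\operatorname{tr}(\sigma^{2})\le 1$, with $\max[\operatorname{tr}(\rho^2),\operatorname{tr}(\sigma^2)]>0$. Then $$\frac{\operatorname{tr}(\rho\sigma)}{\max[\operatorname{tr}(\rho^{2}),\operatorname{tr}(\sigma^{2})]}\;\le\;\operatorname{tr}(\rho\sigma)+\sqrt{1-\operatorname{tr}(\rho^{2})}\,\sqrt{1-\operatorname{tr}(\sigma^{2})}.$$ That is, $\mathcal{F}_2(\rho,\sigma)\le\mathcal{F}_{N}(\rho,\sigma)$.
   Context: The Hilbert–Schmidt fidelity is $\mathcal{F}_2(\rho,\sigma)=\operatorname{tr}(\rho\sigma)/\max[\operatorname{tr}(\rho^2),\operatorname{tr}(\sigma^2)]$ (defined when the denominator is nonzero), and the super-fidelity is $\mathcal{F}_N(\rho,\sigma)=\operatorname{tr}(\rho\sigma)+\sqrt{1-\operatorname{tr}(\rho^2)}\sqrt{1-\operatorname{tr}(\sigma^2)}$. *)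

theory Defs
  imports "HOL-Analysis.Analysis"
begin

definition hermitian_mat :: "complex^'n^'n \<Rightarrow> bool" where
  "hermitian_mat A \<longleftrightarrow> (\<forall>i j. A $ i $ j = cnj (A $ j $ i))"

end

theory Submission
  imports Defs
begin

text \<open>
  Matrices are vectors of the real inner product space \<open>complex^'n^'n\<close>, where
  \<open>inner A B = (\<Sum>i k. Re (A$i$k * cnj (B$i$k)))\<close>; Hermitian symmetry of \<open>\<sigma>\<close> turns
  \<open>Re tr(\<rho>\<sigma>)\<close> into \<open>inner \<rho> \<sigma>\<close>. So \<open>a = tr \<rho>\<^sup>2\<close> and \<open>b = tr \<sigma>\<^sup>2\<close> are nonnegative, and
  \<open>c = tr(\<rho>\<sigma>)\<close> satisfies \<open>c\<^sup>2 \<le> a b\<close> by Cauchy-Schwarz. What remains is an inequality of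
  reals: if \<open>b \<le> a\<close> it reads \<open>c (1 - a) \<le> a \<surd>((1 - a)(1 - b))\<close>, which after squaring
  follows from \<open>c\<^sup>2 \<le> a b\<close> and \<open>b (1 - a) \<le> a (1 - b)\<close>.
\<close>

lemma inner_complex_eq_Re_mult_cnj: "inner z w = Re (z * cnj w)"
  by (simp add: inner_complex_def)

lemma Re_trace_mult_hermitian:
  fixes A B :: "complex^'n^'n"
  assumes "hermitian_mat B"
  shows "Re (trace (A ** B)) = inner A B"
proof -
  have "trace (A ** B) = (\<Sum>i\<in>UNIV. \<Sum>k\<in>UNIV. A$i$k * B$k$i)"
    by (simp add: trace_def matrix_matrix_mult_def)
  also have "\<dots> = (\<Sum>i\<in>UNIV. \<Sum>k\<in>UNIV. A$i$k * cnj (B$i$k))"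
    using assms unfolding hermitian_mat_def by (intro sum.cong refl) metis
  finally show ?thesis
    by (simp add: inner_vec_def inner_complex_eq_Re_mult_cnj)
qed

lemma div_le_add_sqrt_one_minus:
  fixes a b c :: real
  assumes "0 \<le> b" "b \<le> a" "a \<le> 1" "0 < a" "c\<^sup>2 \<le> a * b"
  shows "c / a \<le> c + sqrt (1 - a) * sqrt (1 - b)"
proof -
  have "(c * (1 - a))\<^sup>2 \<le> a * b * (1 - a)\<^sup>2"
    using assms by (simp add: power_mult_distrib mult_right_mono)
  also have "\<dots> = a * (1 - a) * (b * (1 - a))"
    by (simp add: power2_eq_square)
  also have "\<dots> \<le> a * (1 - a) * (a * (1 - b))"
    using assms by (intro mult_left_mono) (auto simp: algebra_simps)
  also have "\<dots> = a\<^sup>2 * ((1 - a) * (1 - b))"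
    by (simp add: power2_eq_square)
  also have "\<dots> = (a * sqrt ((1 - a) * (1 - b)))\<^sup>2"
    using assms by (simp add: power_mult_distrib)
  finally have "c * (1 - a) \<le> a * sqrt ((1 - a) * (1 - b))"
    by (rule power2_le_imp_le) (use assms in simp)
  then have "c / a - c \<le> sqrt ((1 - a) * (1 - b))"
    using assms by (simp add: diff_divide_distrib pos_divide_le_eq algebra_simps)
  then show ?thesis
    by (simp add: real_sqrt_mult)
qed

lemma div_max_le_add_sqrt_one_minus:
  fixes a b c :: real
  assumes "0 \<le> a" "0 \<le> b" "a \<le> 1" "b \<le> 1" "0 < max a b" "c\<^sup>2 \<le> a * b"
  shows "c / max a b \<le> c + sqrt (1 - a) * sqrt (1 - b)"
proof (cases "b \<le> a")
  case True
  then have "max a b = a" by simp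
  with True assms show ?thesis
    using div_le_add_sqrt_one_minus[of b a c] by simp
next
  case False
  then have "max a b = b" by simp
  with False assms show ?thesis
    using div_le_add_sqrt_one_minus[of a b c] by (simp add: mult.commute)
qed

theorem theorem1:
  fixes \<rho> \<sigma> :: "complex^'n^'n"
  assumes "hermitian_mat \<rho>" and "hermitian_mat \<sigma>"
    and "Re (trace (\<rho> ** \<rho>)) \<le> 1" and "Re (trace (\<sigma> ** \<sigma>)) \<le> 1"
    and "max (Re (trace (\<rho> ** \<rho>))) (Re (trace (\<sigma> ** \<sigma>))) > 0"
  shows "Re (trace (\<rho> ** \<sigma>)) / max (Re (trace (\<rho> ** \<rho>))) (Re (trace (\<sigma> ** \<sigma>)))
         \<le> Re (trace (\<rho> ** \<sigma>))
            + sqrt (1 - Re (trace (\<rho> ** \<rho>))) * sqrt (1 - Re (trace (\<sigma> ** \<sigma>)))"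
proof -
  have "Re (trace (\<rho> ** \<sigma>)) = inner \<rho> \<sigma>"
    and "Re (trace (\<rho> ** \<rho>)) = inner \<rho> \<rho>"
    and "Re (trace (\<sigma> ** \<sigma>)) = inner \<sigma> \<sigma>"
    using assms(1,2) by (simp_all only: Re_trace_mult_hermitian)
  with assms show ?thesis
    using div_max_le_add_sqrt_one_minus[OF inner_ge_zero inner_ge_zero _ _ _ Cauchy_Schwarz_ineq]
    by simp
qed

end
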